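(* Let $f, g \in \mathrm{Inj}(\Omega)$ and suppose $f = hh_1gh_2h^{-1}$ for some $h \in \mathrm{Sym}(\Omega)$ and $h_1, h_2 \in \mathrm{Fin}(\Omega)$. Then $f \approx_{\mathrm{fin}} g$.
   Context: $\Omega$ is a countably infinite set; maps are written on the right and composed left to right. $\mathrm{Inj}(\Omega)$ is the monoid of injective maps $\Omega\to\Omega$, $\mathrm{Sym}(\Omega)$ the permutation group, $\mathrm{Fin}(\Omega)$ the permutations moving only finitely many points. For $f\in\mathrm{Inj}(\Omega)$, a cycle of $f$ is a nonempty $\Sigma\subseteq\Omega$ such that (a) for all $\alpha\in\Omega$, $(\alpha)f\in\Sigma$ iff $\alpha\in\Sigma$, and (b) no proper nonempty subset of $\Sigma$ satisfies (a). A forward cycle is an infinite cycle $\Sigma$ with $\Sigma\setminus(\Omega)f\ne\emptyset$; an open cycle is an infinite cycle that is not forward. For $n\in\mathbb{Z}_+$, $(f)\mathrm{C}_n$ is the cardinal number of cycles of $f$ of cardinality $n$; $(f)\mathrm{C}_{\mathrm{open}}$, $(f)\mathrm{C}_{\mathrm{fwd}}$ are the numbers of open and forward cycles. $f\approx_{\mathrm{fin}}g$ means: $(f)\mathrm{C}_{\mathrm{open}}=(g)\mathrm{C}_{\mathrm{open}}$; $(f)\mathrm{C}_{\mathrm{fwd}}=(g)\mathrm{C}_{\mathrm{fwd}}$; $(f)\mathrm{C}_n\ne(g)\mathrm{C}_n$ for only finitely many $n\in\mathbb{Z}_+$; and whenever $(f)\mathrm{C}_n\ne(g)\mathrm{C}_n$,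 both are finite. *)

theory Defs
  imports Main "HOL-Library.Countable" "HOL-Library.Extended_Nat"
begin

text \<open>Omega is modelled as the universe of a countable type 'a with infinite UNIV.
Maps are Isabelle functions; the paper composes left to right, so the paper's
product p q (first p, then q) is the Isabelle function q \<circ> p.\<close>

definition Fin_perm :: "('a \<Rightarrow> 'a) \<Rightarrow> bool" where
  "Fin_perm h \<longleftrightarrow> bij h \<and> finite {x. h x \<noteq> x}"

definition closed_under :: "('a \<Rightarrow> 'a) \<Rightarrow> 'a set \<Rightarrow> bool" where
  "closed_under f S \<longleftrightarrow> (\<forall>x. f x \<in> S \<longleftrightarrow> x \<in> S)"

definition is_cycle :: "('a \<Rightarrow> 'a) \<Rightarrow> 'a set \<Rightarrow> bool" where
  "is_cycle f S \<longleftrightarrow> S \<noteq> {} \<and> closed_under f S \<and>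
     (\<forall>T. T \<subseteq> S \<and> T \<noteq> {} \<and> T \<noteq> S \<longrightarrow> \<not> closed_under f T)"

definition is_fwd_cycle :: "('a \<Rightarrow> 'a) \<Rightarrow> 'a set \<Rightarrow> bool" where
  "is_fwd_cycle f S \<longleftrightarrow> is_cycle f S \<and> infinite S \<and> S - range f \<noteq> {}"

definition is_open_cycle :: "('a \<Rightarrow> 'a) \<Rightarrow> 'a set \<Rightarrow> bool" where
  "is_open_cycle f S \<longleftrightarrow> is_cycle f S \<and> infinite S \<and> \<not> is_fwd_cycle f S"

text \<open>Cardinal of a set of cycles. Since Omega is countable, any such cardinal is
either finite or aleph_0, so enat is a faithful codomain.\<close>
definition ecard :: "'b set \<Rightarrow> enat" where
  "ecard S = (if finite S then enat (card S) else \<infinity>)"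

definition C_n :: "nat \<Rightarrow> ('a \<Rightarrow> 'a) \<Rightarrow> enat" where
  "C_n n f = ecard {S. is_cycle f S \<and> finite S \<and> card S = n}"

definition C_open :: "('a \<Rightarrow> 'a) \<Rightarrow> enat" where
  "C_open f = ecard {S. is_open_cycle f S}"

definition C_fwd :: "('a \<Rightarrow> 'a) \<Rightarrow> enat" where
  "C_fwd f = ecard {S. is_fwd_cycle f S}"

definition approx_fin :: "('a \<Rightarrow> 'a) \<Rightarrow> ('a \<Rightarrow> 'a) \<Rightarrow> bool" where
  "approx_fin f g \<longleftrightarrow> C_open f = C_open g \<and> C_fwd f = C_fwd g \<and>
     finite {n. 0 < n \<and> C_n n f \<noteq> C_n n g} \<and>
     (\<forall>n. 0 < n \<and> C_n n f \<noteq> C_n n g \<longrightarrow> C_n n f \<noteq> \<infinity> \<and> C_n n g \<noteq> \<infinity>)"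

end

theory Submission
  imports Defs
begin

text \<open>
  Put k = h2 \<circ> g \<circ> h1, so that f = inv h \<circ> k \<circ> h.  Conjugation by the
  permutation h maps the cycles of f bijectively onto the cycles of k, preserving sizes and
  the forward/open distinction, so f and k have the same cycle counts.  It remains to compare
  g and k, which agree outside the finite set D of points moved by h1 or sent by g to points
  moved by h2.  Let E = D \<union> g(D) \<union> k(D).  Cycles avoiding E are the same for g and k (and
  of the same kind), and only finitely many cycles meet E.  Among those:
  \<^item> the numbers of infinite cycles agree, since for both maps it equals the least number of
    exits (points mapped outside) of a finite set W \<supseteq> E, and g, k have the same exits;
  \<^item> the numbers of forward cycles agree, since each contains exactly one point outside the
    range, and these points can be counted in terms of data on which g and k agree;
  \<^item> hence the numbers of open cycles agree, and the numbers of finite cycles of size n can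
    only differ for the finitely many sizes of cycles meeting E, where both are finite.
\<close>

section \<open>Cycles as minimal closed sets\<close>

lemma closed_under_Inter:
  "(\<And>S. S \<in> F \<Longrightarrow> closed_under f S) \<Longrightarrow> closed_under f (\<Inter>F)"
  unfolding closed_under_def by blast

lemma closed_under_Diff:
  "closed_under f S \<Longrightarrow> closed_under f T \<Longrightarrow> closed_under f (S - T)"
  unfolding closed_under_def by blast

lemma closed_under_Int:
  "closed_under f S \<Longrightarrow> closed_under f T \<Longrightarrow> closed_under f (S \<inter> T)"
  unfolding closed_under_def by blast

lemma closed_under_Union:
  "(\<And>S. S \<in> F \<Longrightarrow> closed_under f S) \<Longrightarrow> closed_under f (\<Union>F)"
  unfolding closed_under_def by blast

lemma closed_under_funpow: "closed_under f S \<Longrightarrow> x \<in> S \<Longrightarrow> (f ^^ n) x \<in> S"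
  by (induction n) (auto simp: closed_under_def)

definition cycle_of :: "('a \<Rightarrow> 'a) \<Rightarrow> 'a \<Rightarrow> 'a set" where
  "cycle_of f x = \<Inter>{S. closed_under f S \<and> x \<in> S}"

lemma mem_cycle_of: "x \<in> cycle_of f x"
  unfolding cycle_of_def by blast

lemma closed_under_cycle_of: "closed_under f (cycle_of f x)"
  unfolding cycle_of_def by (rule closed_under_Inter) blast

lemma cycle_of_least: "closed_under f S \<Longrightarrow> x \<in> S \<Longrightarrow> cycle_of f x \<subseteq> S"
  unfolding cycle_of_def by blast

text \<open>Least closed sets are minimal: a closed proper subset either contains the point,
  contradicting leastness, or misses it, and then its complement is a smaller closed set.\<close>

lemma is_cycle_cycle_of: "is_cycle f (cycle_of f x)"
  unfolding is_cycle_def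
proof (intro conjI allI impI)
  show "cycle_of f x \<noteq> {}" using mem_cycle_of[of x f] by blast
  show "closed_under f (cycle_of f x)" by (rule closed_under_cycle_of)
  fix T assume T: "T \<subseteq> cycle_of f x \<and> T \<noteq> {} \<and> T \<noteq> cycle_of f x"
  show "\<not> closed_under f T"
  proof
    assume closed: "closed_under f T"
    show False
    proof (cases "x \<in> T")
      case True
      then show False using cycle_of_least[OF closed] T by blast
    next
      case False
      have "cycle_of f x \<subseteq> cycle_of f x - T"
        using False mem_cycle_of[of x f]
        by (intro cycle_of_least closed_under_Diff closed_under_cycle_of closed) blast
      then show False using T by blast
    qed
  qed
qed

lemma cycle_closed: "is_cycle f S \<Longrightarrow> closed_under f S"
  unfolding is_cycle_def by blast

lemma cycle_minimal:
  "is_cycle f S \<Longrightarrow> closed_under f T \<Longrightarrow> T \<subseteq> S \<Longrightarrow> T \<noteq> {} \<Longrightarrow> T = S"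
  unfolding is_cycle_def by blast

lemma cycle_eq_cycle_of: "is_cycle f S \<Longrightarrow> x \<in> S \<Longrightarrow> S = cycle_of f x"
  using cycle_minimal[of f S "cycle_of f x"] cycle_of_least[of f S x]
    closed_under_cycle_of[of f x] mem_cycle_of[of x f] cycle_closed[of f S]
  by blast

lemma cycles_disjoint:
  "is_cycle f S \<Longrightarrow> is_cycle f T \<Longrightarrow> x \<in> S \<Longrightarrow> x \<in> T \<Longrightarrow> S = T"
  using cycle_eq_cycle_of[of f S x] cycle_eq_cycle_of[of f T x] by simp

lemma cycle_of_apply: "cycle_of f (f x) = cycle_of f x"
  using cycle_eq_cycle_of[OF is_cycle_cycle_of, of "f x" f x]
    closed_under_cycle_of[of f x] mem_cycle_of[of x f]
  unfolding closed_under_def by blast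

lemma finite_invariant_image_eq:
  assumes "inj f" "finite Q" "f ` Q \<subseteq> Q"
  shows "f ` Q = Q"
  using endo_inj_surj[OF assms(2,3)] assms(1) inj_on_subset by blast

lemma finite_invariant_closed:
  assumes "inj f" "finite Q" "f ` Q \<subseteq> Q"
  shows "closed_under f Q"
  using finite_invariant_image_eq[OF assms] assms(1)
  unfolding closed_under_def by (auto dest: injD)

lemma finite_cycle_subset_range:
  assumes "inj f" "is_cycle f S" "finite S"
  shows "S \<subseteq> range f"
proof -
  have "f ` S \<subseteq> S" using cycle_closed[OF assms(2)] unfolding closed_under_def by blast
  then show ?thesis using finite_invariant_image_eq[OF assms(1,3)] by blast
qed

lemma cycle_of_initial_point:
  assumes "inj f" "is_cycle f S" "x \<in> S" "x \<notin> range f"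
  shows "S = range (\<lambda>n. (f ^^ n) x)"
proof -
  let ?O = "range (\<lambda>n. (f ^^ n) x)"
  have "closed_under f ?O"
    unfolding closed_under_def
  proof (intro allI iffI)
    fix z assume "f z \<in> ?O"
    then obtain n where n: "f z = (f ^^ n) x" by blast
    show "z \<in> ?O"
    proof (cases n)
      case 0
      then show ?thesis using n assms(4) by (metis funpow_0 rangeI)
    next
      case (Suc m)
      then have "f z = f ((f ^^ m) x)" using n by simp
      then show ?thesis using assms(1) by (auto dest: injD)
    qed
  next
    fix z assume "z \<in> ?O"
    then obtain n where "f z = (f ^^ Suc n) x" by auto
    then show "f z \<in> ?O" by blast
  qed
  moreover have "?O \<subseteq> S"
    using closed_under_funpow[OF cycle_closed[OF assms(2)] assms(3)] by blast
  moreover have "x \<in> ?O" by (metis funpow_0 rangeI)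
  ultimately show ?thesis using cycle_minimal[OF assms(2)] by blast
qed

text \<open>Any two points of a cycle have a common descendant: the points sharing a descendant
  with a fixed point form a closed set.\<close>

lemma cycle_common_descendant:
  assumes "is_cycle f S" "x \<in> S" "y \<in> S"
  shows "\<exists>i j. (f ^^ i) x = (f ^^ j) y"
proof -
  let ?R = "{z. \<exists>i j. (f ^^ i) z = (f ^^ j) y}"
  have "closed_under f ?R"
    unfolding closed_under_def
  proof (intro allI iffI)
    fix z assume "f z \<in> ?R"
    then obtain i j where "(f ^^ i) (f z) = (f ^^ j) y" by blast
    then have "(f ^^ Suc i) z = (f ^^ j) y" by (simp add: funpow_Suc_right del: funpow.simps)
    then show "z \<in> ?R" by blast
  next
    fix z assume "z \<in> ?R"
    then obtain i j where ij: "(f ^^ i) z = (f ^^ j) y" by blast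
    show "f z \<in> ?R"
    proof (cases i)
      case 0
      then have "(f ^^ 0) (f z) = (f ^^ Suc j) y" using ij by simp
      then show ?thesis by blast
    next
      case (Suc m)
      then have "(f ^^ m) (f z) = (f ^^ j) y"
        using ij by (simp add: funpow_Suc_right del: funpow.simps)
      then show ?thesis by blast
    qed
  qed
  moreover have "y \<in> ?R" by (metis (mono_tags) mem_Collect_eq)
  ultimately have "S \<inter> ?R = S"
    using cycle_minimal[OF assms(1) closed_under_Int[OF cycle_closed[OF assms(1)]]] assms(3)
    by blast
  then show ?thesis using assms(2) by blast
qed

lemma cycle_common_descendant_finite:
  assumes "is_cycle f S" "finite F" "F \<subseteq> S"
  shows "\<exists>y\<in>S. \<forall>e\<in>F. \<exists>i. (f ^^ i) e = y"
  using assms(2,3)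
proof (induction F rule: finite_induct)
  case empty
  then show ?case using assms(1) unfolding is_cycle_def by blast
next
  case (insert e F)
  then obtain y where y: "y \<in> S" "\<forall>e\<in>F. \<exists>i. (f ^^ i) e = y" by blast
  obtain i j where ij: "(f ^^ i) e = (f ^^ j) y"
    using cycle_common_descendant[OF assms(1), of e y] insert y by blast
  have "\<forall>e'\<in>F. \<exists>i. (f ^^ i) e' = (f ^^ j) y"
    using y(2) by (metis funpow_add comp_apply)
  then have "\<forall>e'\<in>insert e F. \<exists>i. (f ^^ i) e' = (f ^^ j) y" using ij by blast
  moreover have "(f ^^ j) y \<in> S" using closed_under_funpow[OF cycle_closed[OF assms(1)] y(1)] .
  ultimately show ?case by blast
qed


section \<open>Cycles meeting a finite set\<close>

definition cycles_meeting :: "('a \<Rightarrow> 'a) \<Rightarrow> 'a set \<Rightarrow> 'a set set" where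
  "cycles_meeting f E = {S. is_cycle f S \<and> S \<inter> E \<noteq> {}}"

definition basin :: "('a \<Rightarrow> 'a) \<Rightarrow> 'a set \<Rightarrow> 'a set" where
  "basin f E = {x. cycle_of f x \<inter> E \<noteq> {}}"

definition exits :: "('a \<Rightarrow> 'a) \<Rightarrow> 'a set \<Rightarrow> 'a set" where
  "exits f W = {z\<in>W. f z \<notin> W}"

definition window :: "('a \<Rightarrow> 'a) \<Rightarrow> 'a set \<Rightarrow> nat \<Rightarrow> 'a set" where
  "window f Y M = {z. \<exists>u\<in>Y. \<exists>i\<le>M. (f ^^ i) z = u}"

lemma cycles_meeting_subset: "cycles_meeting f E \<subseteq> cycle_of f ` E"
proof
  fix S assume "S \<in> cycles_meeting f E"
  then obtain e where "is_cycle f S" "e \<in> S" "e \<in> E" unfolding cycles_meeting_def by blast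
  then show "S \<in> cycle_of f ` E" using cycle_eq_cycle_of[of f S e] by blast
qed

lemma finite_cycles_meeting: "finite E \<Longrightarrow> finite (cycles_meeting f E)"
  by (rule finite_subset[OF cycles_meeting_subset]) simp

lemma cycle_of_in_cycles_meeting: "e \<in> E \<Longrightarrow> cycle_of f e \<in> cycles_meeting f E"
  unfolding cycles_meeting_def using is_cycle_cycle_of[of f e] mem_cycle_of[of e f] by blast

lemma basin_apply: "f x \<in> basin f E \<longleftrightarrow> x \<in> basin f E"
  unfolding basin_def by (simp add: cycle_of_apply)

lemma subset_basin: "E \<subseteq> basin f E"
  unfolding basin_def using mem_cycle_of[of _ f] by blast

text \<open>Lower bound: every infinite cycle meeting E leaves any finite W \<supseteq> E, for otherwise its
  trace on W would be a finite closed subset; distinct cycles leave through distinct exits.\<close>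

lemma card_infinite_cycles_le_exits:
  assumes "inj f" "finite W" "E \<subseteq> W"
  shows "card {S\<in>cycles_meeting f E. infinite S} \<le> card (exits f W)"
proof -
  let ?I = "{S\<in>cycles_meeting f E. infinite S}"
  have "\<exists>z. z \<in> S \<inter> exits f W" if S: "S \<in> ?I" for S
  proof (rule ccontr)
    assume no_exit: "\<not> ?thesis"
    have cycle: "is_cycle f S" using S unfolding cycles_meeting_def by blast
    have invariant: "f ` (S \<inter> W) \<subseteq> S \<inter> W"
      using no_exit cycle_closed[OF cycle] unfolding exits_def closed_under_def by blast
    have "closed_under f (S \<inter> W)"
      by (rule finite_invariant_closed[OF assms(1) _ invariant]) (simp add: assms(2))
    moreover have "S \<inter> W \<noteq> {}" using S assms(3) unfolding cycles_meeting_def by blast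
    ultimately have "S \<inter> W = S" using cycle_minimal[OF cycle] Int_lower1 by metis
    then have "finite S" using assms(2) by (metis finite_Int)
    then show False using S by simp
  qed
  then obtain exit where exit: "\<And>S. S \<in> ?I \<Longrightarrow> exit S \<in> S \<inter> exits f W" by metis
  have "inj_on exit ?I"
  proof (rule inj_onI)
    fix S T assume S: "S \<in> ?I" and T: "T \<in> ?I" and eq: "exit S = exit T"
    have "is_cycle f S" "is_cycle f T" using S T unfolding cycles_meeting_def by auto
    moreover have "exit S \<in> S" "exit S \<in> T" using exit[OF S] exit[OF T] eq by auto
    ultimately show "S = T" by (rule cycles_disjoint)
  qed
  moreover have "exit ` ?I \<subseteq> exits f W" using exit by blast
  moreover have "finite (exits f W)" using assms(2) unfolding exits_def by simp
  ultimately show ?thesis by (rule card_inj_on_le)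
qed

text \<open>Windows are finite: each target has finitely many preimages under each iterate.\<close>

lemma finite_window:
  assumes "inj f" "finite Y"
  shows "finite (window f Y M)"
proof -
  have "window f Y M = (\<Union>u\<in>Y. \<Union>i\<in>{..M}. (f ^^ i) -` {u})"
    unfolding window_def by blast
  moreover have "inj (f ^^ i)" for i using assms(1) by (rule inj_fn)
  ultimately show ?thesis using assms(2) by (simp add: finite_vimageI)
qed

lemma exits_window_subset: "exits f (window f Y M) \<subseteq> Y"
proof
  fix z assume z: "z \<in> exits f (window f Y M)"
  then obtain u i where u: "u \<in> Y" "i \<le> M" "(f ^^ i) z = u"
    unfolding exits_def window_def by blast
  show "z \<in> Y"
  proof (cases i)
    case 0
    then show ?thesis using u by simp
  next
    case (Suc j)
    then have "(f ^^ j) (f z) = u" using u by (simp add: funpow_Suc_right del: funpow.simps)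
    moreover have "j \<le> M" using u(2) Suc by simp
    ultimately have "f z \<in> window f Y M" using u(1) unfolding window_def by blast
    then show ?thesis using z unfolding exits_def by blast
  qed
qed

lemma exits_Un_closed: "closed_under f B \<Longrightarrow> exits f (A \<union> B) \<subseteq> exits f A"
  unfolding exits_def closed_under_def by blast

lemma finite_bounded_witnesses:
  assumes "finite E" "\<And>e. e \<in> E \<Longrightarrow> \<exists>i::nat. P e i"
  shows "\<exists>M. \<forall>e\<in>E. \<exists>i\<le>M. P e i"
  using assms
proof (induction E rule: finite_induct)
  case empty
  then show ?case by blast
next
  case (insert a E)
  then obtain M where M: "\<forall>e\<in>E. \<exists>i\<le>M. P e i" by blast
  obtain j where j: "P a j" using insert.prems by blast
  have "\<forall>e\<in>insert a E. \<exists>i\<le>max M j. P e i"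
    using M j by (metis insert_iff max.cobounded1 max.cobounded2 order_trans)
  then show ?case by blast
qed

text \<open>Upper bound: choose on every infinite cycle meeting E a common descendant of its points
  in E; the window of these descendants, together with the finite cycles meeting E, contains E
  and has no other exits than the chosen descendants.\<close>

lemma exists_window_few_exits:
  assumes "inj f" "finite E"
  shows "\<exists>W. finite W \<and> E \<subseteq> W \<and> card (exits f W) \<le> card {S\<in>cycles_meeting f E. infinite S}"
proof -
  let ?I = "{S\<in>cycles_meeting f E. infinite S}"
  let ?F = "{S\<in>cycles_meeting f E. finite S}"
  have "\<exists>y\<in>S. \<forall>e\<in>S \<inter> E. \<exists>i. (f ^^ i) e = y" if "S \<in> ?I" for S
    using that assms(2) unfolding cycles_meeting_def
    by (intro cycle_common_descendant_finite) auto
  then obtain y where y: "\<And>S. S \<in> ?I \<Longrightarrow> \<forall>e\<in>S \<inter> E. \<exists>i. (f ^^ i) e = y S"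
    by metis
  have "\<exists>i. (f ^^ i) e = y (cycle_of f e)" if "e \<in> E" "infinite (cycle_of f e)" for e
    using that y[of "cycle_of f e"] cycle_of_in_cycles_meeting[of e E f] mem_cycle_of[of e f] by blast
  then have "\<exists>M. \<forall>e\<in>{e\<in>E. infinite (cycle_of f e)}. \<exists>i\<le>M. (f ^^ i) e = y (cycle_of f e)"
    using assms(2) by (intro finite_bounded_witnesses) auto
  then obtain M where M: "\<And>e. e \<in> E \<Longrightarrow> infinite (cycle_of f e) \<Longrightarrow> \<exists>i\<le>M. (f ^^ i) e = y (cycle_of f e)"
    by blast
  define W where "W = window f (y ` ?I) M \<union> \<Union>?F"
  have fin_meeting: "finite (cycles_meeting f E)" using finite_cycles_meeting[OF assms(2)] .
  have "finite (\<Union>?F)" using fin_meeting by (intro finite_Union) auto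
  then have "finite W" unfolding W_def using finite_window[OF assms(1)] fin_meeting by simp
  moreover have "E \<subseteq> W"
  proof
    fix e assume e: "e \<in> E"
    show "e \<in> W"
    proof (cases "finite (cycle_of f e)")
      case True
      then show ?thesis
        using cycle_of_in_cycles_meeting[OF e] mem_cycle_of[of e f] unfolding W_def by blast
    next
      case False
      then show ?thesis
        using M[OF e] cycle_of_in_cycles_meeting[OF e] unfolding W_def window_def by blast
    qed
  qed
  moreover have "card (exits f W) \<le> card ?I"
  proof -
    have "closed_under f (\<Union>?F)"
      using cycle_closed unfolding cycles_meeting_def by (intro closed_under_Union) auto
    then have "exits f W \<subseteq> exits f (window f (y ` ?I) M)"
      unfolding W_def by (rule exits_Un_closed)
    also have "\<dots> \<subseteq> y ` ?I" by (rule exits_window_subset)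
    finally have "exits f W \<subseteq> y ` ?I" .
    then have "card (exits f W) \<le> card (y ` ?I)" using fin_meeting by (simp add: card_mono)
    also have "\<dots> \<le> card ?I" using fin_meeting by (simp add: card_image_le)
    finally show ?thesis .
  qed
  ultimately show ?thesis by blast
qed

section \<open>Forward cycles and initial points\<close>

text \<open>A forward cycle contains exactly one point without preimage, so forward cycles meeting
  E correspond to the points of the basin of E outside the range.\<close>

lemma forward_cycles_bij_initial_points:
  assumes "inj f"
  shows "bij_betw (cycle_of f) (basin f E - range f) {S\<in>cycles_meeting f E. is_fwd_cycle f S}"
  unfolding bij_betw_def
proof (intro conjI)
  show "inj_on (cycle_of f) (basin f E - range f)"
  proof (rule inj_onI)
    fix x x' assume x: "x \<in> basin f E - range f" and x': "x' \<in> basin f E - range f"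
      and eq: "cycle_of f x = cycle_of f x'"
    have "cycle_of f x = range (\<lambda>n. (f ^^ n) x)"
      using cycle_of_initial_point[OF assms is_cycle_cycle_of mem_cycle_of] x by blast
    then obtain n where n: "x' = (f ^^ n) x" using eq mem_cycle_of[of x' f] by blast
    show "x = x'"
    proof (cases n)
      case 0
      then show ?thesis using n by simp
    next
      case (Suc m)
      then show ?thesis using n x' by auto
    qed
  qed
  show "cycle_of f ` (basin f E - range f) = {S\<in>cycles_meeting f E. is_fwd_cycle f S}"
  proof (intro equalityI subsetI)
    fix S assume "S \<in> cycle_of f ` (basin f E - range f)"
    then obtain x where x: "x \<in> basin f E - range f" and S: "S = cycle_of f x" by blast
    have "infinite S"
      using finite_cycle_subset_range[OF assms is_cycle_cycle_of, of x] mem_cycle_of[of x f] x S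
      by blast
    then show "S \<in> {S\<in>cycles_meeting f E. is_fwd_cycle f S}"
      using x S is_cycle_cycle_of[of f x] mem_cycle_of[of x f]
      unfolding basin_def cycles_meeting_def is_fwd_cycle_def by blast
  next
    fix S assume S: "S \<in> {S\<in>cycles_meeting f E. is_fwd_cycle f S}"
    then obtain x where x: "x \<in> S" "x \<notin> range f" unfolding is_fwd_cycle_def by blast
    have "is_cycle f S" using S unfolding cycles_meeting_def by simp
    then have "S = cycle_of f x" using x(1) by (rule cycle_eq_cycle_of)
    then show "S \<in> cycle_of f ` (basin f E - range f)"
      using x S unfolding basin_def cycles_meeting_def by blast
  qed
qed

lemma card_forward_cycles_meeting:
  assumes "inj f"
  shows "card {S\<in>cycles_meeting f E. is_fwd_cycle f S} = card (basin f E - range f)"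
  using bij_betw_same_card[OF forward_cycles_bij_initial_points[OF assms]] by simp


section \<open>Counting cycles\<close>

lemma cycle_class_split:
  assumes "\<And>S. P S \<Longrightarrow> is_cycle f S"
  shows "{S. P S} = {S. P S \<and> S \<inter> E = {}} \<union> {S\<in>cycles_meeting f E. P S}"
  using assms unfolding cycles_meeting_def by blast

lemma ecard_Un_eq:
  assumes "C \<inter> A = {}" "C \<inter> A' = {}" "finite A" "finite A'" "card A = card A'"
  shows "ecard (C \<union> A) = ecard (C \<union> A')"
proof (cases "finite C")
  case True
  then show ?thesis using assms by (simp add: ecard_def card_Un_disjoint)
next
  case False
  then show ?thesis by (simp add: ecard_def)
qed

lemma ecard_Un_neq_finite:
  assumes "finite A" "finite A'" "ecard (C \<union> A) \<noteq> ecard (C \<union> A')"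
  shows "ecard (C \<union> A) \<noteq> \<infinity> \<and> ecard (C \<union> A') \<noteq> \<infinity>"
  using assms by (cases "finite C") (auto simp: ecard_def)

lemma ecard_bij_betw: "bij_betw \<phi> A B \<Longrightarrow> ecard A = ecard B"
  unfolding ecard_def by (simp add: bij_betw_finite bij_betw_same_card)

section \<open>Injective maps differing on a finite set\<close>

lemma closed_under_perturb:
  assumes "closed_under g S" "\<And>x. k x \<noteq> g x \<Longrightarrow> x \<notin> S \<and> k x \<notin> S"
  shows "closed_under k S"
  unfolding closed_under_def
proof
  fix x
  show "k x \<in> S \<longleftrightarrow> x \<in> S"
  proof (cases "k x = g x")
    case True
    then show ?thesis using assms(1) unfolding closed_under_def by simp
  next
    case False
    then show ?thesis using assms(2) by blast
  qed
qed

locale finite_perturbation =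
  fixes g k :: "'a \<Rightarrow> 'a" and D E :: "'a set"
  assumes inj_g: "inj g" and inj_k: "inj k" and finite_E: "finite E"
    and perturbed_in_E: "D \<union> g ` D \<union> k ` D \<subseteq> E"
    and agree: "\<And>x. x \<notin> D \<Longrightarrow> k x = g x"
begin

lemma swap: "finite_perturbation k g D E"
  using inj_g inj_k finite_E perturbed_in_E agree by unfold_locales auto

lemma finite_D: "finite D"
  by (rule finite_subset[OF _ finite_E]) (use perturbed_in_E in blast)

lemma closed_avoiding_iff:
  assumes "S \<inter> E = {}"
  shows "closed_under g S \<longleftrightarrow> closed_under k S"
proof -
  have moved: "x \<notin> S \<and> g x \<notin> S \<and> k x \<notin> S" if "k x \<noteq> g x" for x
  proof -
    have "x \<in> D" using that agree by blast
    then have "x \<in> E" "g x \<in> E" "k x \<in> E" using perturbed_in_E by auto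
    then show ?thesis using assms by blast
  qed
  show ?thesis
  proof
    assume "closed_under g S"
    then show "closed_under k S" by (rule closed_under_perturb) (use moved in blast)
  next
    assume "closed_under k S"
    then show "closed_under g S" by (rule closed_under_perturb) (metis moved)
  qed
qed

lemma cycle_avoiding_iff:
  assumes "S \<inter> E = {}"
  shows "is_cycle g S \<longleftrightarrow> is_cycle k S"
proof -
  have "closed_under g T \<longleftrightarrow> closed_under k T" if "T \<subseteq> S" for T
    using that assms by (intro closed_avoiding_iff) blast
  then show ?thesis unfolding is_cycle_def by blast
qed

lemma range_avoiding_eq:
  assumes "closed_under g S" "S \<inter> E = {}"
  shows "S - range g = S - range k"
proof -
  have closed_k: "closed_under k S" using assms closed_avoiding_iff by blast
  have same: "k z = g z" if "z \<in> S" for z using that assms(2) perturbed_in_E agree by blast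
  have "x \<in> range k" if "x \<in> S" "x = g z" for x z
  proof -
    have "z \<in> S" using that assms(1) unfolding closed_under_def by blast
    then show ?thesis using that same[of z] by (metis rangeI)
  qed
  moreover have "x \<in> range g" if "x \<in> S" "x = k z" for x z
    using that closed_k same[of z] unfolding closed_under_def by (metis rangeI)
  ultimately show ?thesis by blast
qed

lemma cycle_of_avoiding_eq:
  assumes "cycle_of g x \<inter> E = {}"
  shows "cycle_of k x = cycle_of g x"
proof -
  have "is_cycle k (cycle_of g x)"
    using cycle_avoiding_iff[OF assms] is_cycle_cycle_of[of g x] by blast
  then show ?thesis using cycle_eq_cycle_of[of k "cycle_of g x" x] mem_cycle_of[of x g] by simp
qed

lemma basin_eq: "basin g E = basin k E"
proof -
  have "cycle_of g x \<inter> E = {} \<longleftrightarrow> cycle_of k x \<inter> E = {}" for x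
    using cycle_of_avoiding_eq[of x] finite_perturbation.cycle_of_avoiding_eq[OF swap, of x] by metis
  then show ?thesis unfolding basin_def by blast
qed

text \<open>Since g and k agree outside D and both map D into E, they have the same exits from
  every superset of E.\<close>

lemma exits_eq:
  assumes "E \<subseteq> W"
  shows "exits g W = exits k W"
proof -
  have "g z \<in> W \<longleftrightarrow> k z \<in> W" for z
  proof (cases "z \<in> D")
    case True
    then show ?thesis using perturbed_in_E assms by blast
  next
    case False
    then show ?thesis using agree by simp
  qed
  then show ?thesis unfolding exits_def by blast
qed

text \<open>By the two bounds on exits, the number of infinite cycles meeting E is the minimum of
  the number of exits over finite W \<supseteq> E, which is the same for g and k.\<close>

lemma card_infinite_meeting_eq:
  "card {S\<in>cycles_meeting g E. infinite S} = card {S\<in>cycles_meeting k E. infinite S}"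
proof -
  obtain W where W: "finite W" "E \<subseteq> W"
      "card (exits g W) \<le> card {S\<in>cycles_meeting g E. infinite S}"
    using exists_window_few_exits[OF inj_g finite_E] by blast
  obtain W' where W': "finite W'" "E \<subseteq> W'"
      "card (exits k W') \<le> card {S\<in>cycles_meeting k E. infinite S}"
    using exists_window_few_exits[OF inj_k finite_E] by blast
  have "card {S\<in>cycles_meeting k E. infinite S} \<le> card (exits k W)"
    using card_infinite_cycles_le_exits[OF inj_k W(1,2)] .
  moreover have "card {S\<in>cycles_meeting g E. infinite S} \<le> card (exits g W')"
    using card_infinite_cycles_le_exits[OF inj_g W'(1,2)] .
  ultimately show ?thesis using W(3) W'(3) exits_eq[OF W(2)] exits_eq[OF W'(2)] by simp
qed

text \<open>Counting points without preimage: the basin U of E is closed, so its points outside the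
  range are U - g(U - D) - g(D), where U - D and g(U - D) do not depend on the map.\<close>

lemma card_initial_points:
  "card (basin g E - range g) = card (basin g E - g ` (basin g E - D)) - card D"
proof -
  define U where "U = basin g E"
  define V where "V = g ` (U - D)"
  have closed_U: "g z \<in> U \<longleftrightarrow> z \<in> U" for z unfolding U_def by (rule basin_apply)
  have DU: "D \<subseteq> U" using subset_basin[of E g] perturbed_in_E unfolding U_def by blast
  have "U \<inter> range g = g ` U" using closed_U by blast
  also have "\<dots> = V \<union> g ` D" unfolding V_def using DU by blast
  finally have range_U: "U \<inter> range g = V \<union> g ` D" .
  have "g ` D \<inter> V = {}" unfolding V_def using inj_g by (auto dest: injD)
  then have gD: "g ` D \<subseteq> U - V" using DU closed_U by blast
  have initial: "U - range g = (U - V) - g ` D" using range_U by blast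
  have "card (U - range g) = card (U - V) - card (g ` D)"
    unfolding initial by (rule card_Diff_subset[OF finite_imageI[OF finite_D] gD])
  also have "card (g ` D) = card D" using card_image inj_g inj_on_subset by blast
  finally show ?thesis unfolding U_def V_def .
qed

lemma card_initial_points_eq: "card (basin g E - range g) = card (basin k E - range k)"
proof -
  have "k ` (basin k E - D) = g ` (basin g E - D)"
    unfolding basin_eq using agree by (intro image_cong) auto
  then show ?thesis
    using card_initial_points finite_perturbation.card_initial_points[OF swap] basin_eq by simp
qed

lemma card_fwd_meeting_eq:
  "card {S\<in>cycles_meeting g E. is_fwd_cycle g S} = card {S\<in>cycles_meeting k E. is_fwd_cycle k S}"
  using card_forward_cycles_meeting[OF inj_g] card_forward_cycles_meeting[OF inj_k]
    card_initial_points_eq by simp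

lemma card_open_meeting_eq:
  "card {S\<in>cycles_meeting g E. is_open_cycle g S} = card {S\<in>cycles_meeting k E. is_open_cycle k S}"
proof -
  have split: "{S\<in>cycles_meeting f E. is_open_cycle f S}
      = {S\<in>cycles_meeting f E. infinite S} - {S\<in>cycles_meeting f E. is_fwd_cycle f S}" for f
    unfolding is_open_cycle_def is_fwd_cycle_def cycles_meeting_def by blast
  have "card {S\<in>cycles_meeting f E. is_open_cycle f S}
      = card {S\<in>cycles_meeting f E. infinite S} - card {S\<in>cycles_meeting f E. is_fwd_cycle f S}"
    for f unfolding split using finite_cycles_meeting[OF finite_E, of f]
    by (intro card_Diff_subset) (auto simp: is_fwd_cycle_def)
  then show ?thesis using card_infinite_meeting_eq card_fwd_meeting_eq by simp
qed

lemma class_decomposition: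
  assumes "\<And>f S. P f S \<Longrightarrow> is_cycle f S"
    and "\<And>S. S \<inter> E = {} \<Longrightarrow> is_cycle g S \<Longrightarrow> is_cycle k S \<Longrightarrow> P g S \<longleftrightarrow> P k S"
  obtains A where "{S. P g S} = A \<union> {S\<in>cycles_meeting g E. P g S}"
    and "{S. P k S} = A \<union> {S\<in>cycles_meeting k E. P k S}"
    and "A \<inter> {S\<in>cycles_meeting g E. P g S} = {}" "A \<inter> {S\<in>cycles_meeting k E. P k S} = {}"
proof -
  let ?A = "{S. P g S \<and> S \<inter> E = {}}"
  have "P g S \<and> S \<inter> E = {} \<longleftrightarrow> P k S \<and> S \<inter> E = {}" for S
    using assms(1)[of g S] assms(1)[of k S] assms(2)[of S] cycle_avoiding_iff[of S] by blast
  then have avoid: "?A = {S. P k S \<and> S \<inter> E = {}}" by blast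
  have split_g: "{S. P g S} = ?A \<union> {S\<in>cycles_meeting g E. P g S}"
    by (rule cycle_class_split) (rule assms(1))
  have split_k: "{S. P k S} = ?A \<union> {S\<in>cycles_meeting k E. P k S}"
    unfolding avoid by (rule cycle_class_split) (rule assms(1))
  have disjoint: "?A \<inter> {S\<in>cycles_meeting f E. P f S} = {}" for f
    unfolding cycles_meeting_def by blast
  show thesis by (rule that[OF split_g split_k disjoint disjoint])
qed

lemma finite_class_meeting: "finite {S\<in>cycles_meeting f E. Q S}"
  using finite_cycles_meeting[OF finite_E, of f] by simp

lemma ecard_class_eq:
  assumes "\<And>f S. P f S \<Longrightarrow> is_cycle f S"
    and "\<And>S. S \<inter> E = {} \<Longrightarrow> is_cycle g S \<Longrightarrow> is_cycle k S \<Longrightarrow> P g S \<longleftrightarrow> P k S"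
    and "card {S\<in>cycles_meeting g E. P g S} = card {S\<in>cycles_meeting k E. P k S}"
  shows "ecard {S. P g S} = ecard {S. P k S}"
proof -
  obtain A where A: "{S. P g S} = A \<union> {S\<in>cycles_meeting g E. P g S}"
    "{S. P k S} = A \<union> {S\<in>cycles_meeting k E. P k S}"
    "A \<inter> {S\<in>cycles_meeting g E. P g S} = {}" "A \<inter> {S\<in>cycles_meeting k E. P k S} = {}"
    by (rule class_decomposition[of P, OF assms(1,2)])
  show ?thesis unfolding A(1,2)
    by (rule ecard_Un_eq[OF A(3,4) finite_class_meeting finite_class_meeting assms(3)])
qed

lemma ecard_class_neq:
  assumes "\<And>f S. P f S \<Longrightarrow> is_cycle f S"
    and "\<And>S. S \<inter> E = {} \<Longrightarrow> is_cycle g S \<Longrightarrow> is_cycle k S \<Longrightarrow> P g S \<longleftrightarrow> P k S"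
    and "ecard {S. P g S} \<noteq> ecard {S. P k S}"
  shows "ecard {S. P g S} \<noteq> \<infinity> \<and> ecard {S. P k S} \<noteq> \<infinity>"
    and "\<exists>S \<in> cycles_meeting g E \<union> cycles_meeting k E. P g S \<or> P k S"
proof -
  obtain A where A: "{S. P g S} = A \<union> {S\<in>cycles_meeting g E. P g S}"
    "{S. P k S} = A \<union> {S\<in>cycles_meeting k E. P k S}"
    "A \<inter> {S\<in>cycles_meeting g E. P g S} = {}" "A \<inter> {S\<in>cycles_meeting k E. P k S} = {}"
    by (rule class_decomposition[of P, OF assms(1,2)])
  show "ecard {S. P g S} \<noteq> \<infinity> \<and> ecard {S. P k S} \<noteq> \<infinity>"
    using assms(3) unfolding A(1,2) by (rule ecard_Un_neq_finite[OF finite_class_meeting finite_class_meeting])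
  show "\<exists>S \<in> cycles_meeting g E \<union> cycles_meeting k E. P g S \<or> P k S"
  proof (rule ccontr)
    assume "\<not> ?thesis"
    then have "{S\<in>cycles_meeting g E. P g S} = {}" "{S\<in>cycles_meeting k E. P k S} = {}"
      by auto
    then have "{S. P g S} = {S. P k S}" unfolding A(1,2) by (simp only: Un_empty_right)
    then show False using assms(3) by simp
  qed
qed

lemma C_open_eq: "C_open k = C_open g"
proof -
  have "ecard {S. is_open_cycle g S} = ecard {S. is_open_cycle k S}"
  proof (rule ecard_class_eq)
    show "is_cycle f S" if "is_open_cycle f S" for f :: "'a \<Rightarrow> 'a" and S using that unfolding is_open_cycle_def by blast
    show "is_open_cycle g S \<longleftrightarrow> is_open_cycle k S"
      if "S \<inter> E = {}" "is_cycle g S" "is_cycle k S" for S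
      using that range_avoiding_eq[OF cycle_closed[OF that(2)] that(1)]
      unfolding is_open_cycle_def is_fwd_cycle_def by auto
  qed (rule card_open_meeting_eq)
  then show ?thesis unfolding C_open_def by simp
qed

lemma C_fwd_eq: "C_fwd k = C_fwd g"
proof -
  have "ecard {S. is_fwd_cycle g S} = ecard {S. is_fwd_cycle k S}"
  proof (rule ecard_class_eq)
    show "is_cycle f S" if "is_fwd_cycle f S" for f :: "'a \<Rightarrow> 'a" and S using that unfolding is_fwd_cycle_def by blast
    show "is_fwd_cycle g S \<longleftrightarrow> is_fwd_cycle k S"
      if "S \<inter> E = {}" "is_cycle g S" "is_cycle k S" for S
      using that range_avoiding_eq[OF cycle_closed[OF that(2)] that(1)]
      unfolding is_fwd_cycle_def by auto
  qed (rule card_fwd_meeting_eq)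
  then show ?thesis unfolding C_fwd_def by simp
qed

lemma C_n_neq:
  assumes "C_n n k \<noteq> C_n n g"
  shows "C_n n k \<noteq> \<infinity> \<and> C_n n g \<noteq> \<infinity>"
    and "n \<in> card ` (cycles_meeting g E \<union> cycles_meeting k E)"
proof -
  let ?P = "\<lambda>f S. is_cycle f S \<and> finite S \<and> card S = n"
  have neq: "ecard {S. ?P g S} \<noteq> ecard {S. ?P k S}" using assms unfolding C_n_def by auto
  note by_class = ecard_class_neq[of ?P, OF _ _ neq]
  show "C_n n k \<noteq> \<infinity> \<and> C_n n g \<noteq> \<infinity>" using by_class(1) unfolding C_n_def by auto
  show "n \<in> card ` (cycles_meeting g E \<union> cycles_meeting k E)" using by_class(2) by auto
qed

theorem approx_fin_perturbation: "approx_fin k g"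
proof -
  have "{n. 0 < n \<and> C_n n k \<noteq> C_n n g} \<subseteq> card ` (cycles_meeting g E \<union> cycles_meeting k E)"
    using C_n_neq(2) by blast
  moreover have "finite (card ` (cycles_meeting g E \<union> cycles_meeting k E))"
    using finite_cycles_meeting[OF finite_E] by simp
  ultimately have "finite {n. 0 < n \<and> C_n n k \<noteq> C_n n g}" by (rule finite_subset)
  then show ?thesis unfolding approx_fin_def using C_open_eq C_fwd_eq C_n_neq(1) by blast
qed

end


section \<open>Invariance under conjugation\<close>

locale conjugation =
  fixes f k h :: "'a \<Rightarrow> 'a"
  assumes bij_h: "bij h" and f_conj: "f = inv h \<circ> k \<circ> h"
begin

lemma h_inv: "h (inv h y) = y" "inv h (h x) = x"
  using bij_h by (simp_all add: bij_is_surj surj_f_inv_f bij_is_inj)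

lemma inj_h: "inj h"
  using bij_h by (rule bij_is_inj)

lemma vimage_image: "h -` (h ` S) = S" "h ` (h -` T) = T"
  using bij_h by (auto simp: bij_def inj_vimage_image_eq surj_image_vimage_eq)

lemma closed_under_iff: "closed_under f S \<longleftrightarrow> closed_under k (h ` S)"
proof -
  have "f x \<in> S \<longleftrightarrow> k (h x) \<in> h ` S" for x
    using f_conj h_inv inj_h by (auto simp: inj_image_mem_iff) (metis imageI)
  moreover have "x \<in> S \<longleftrightarrow> h x \<in> h ` S" for x using inj_h by (simp add: inj_image_mem_iff)
  ultimately show ?thesis unfolding closed_under_def by (metis h_inv(1))
qed

lemma cycle_iff: "is_cycle f S \<longleftrightarrow> is_cycle k (h ` S)"
proof
  assume S: "is_cycle f S"
  show "is_cycle k (h ` S)" unfolding is_cycle_def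
  proof (intro conjI allI impI)
    show "h ` S \<noteq> {}" using S unfolding is_cycle_def by blast
    show "closed_under k (h ` S)" using S closed_under_iff unfolding is_cycle_def by blast
    fix T assume T: "T \<subseteq> h ` S \<and> T \<noteq> {} \<and> T \<noteq> h ` S"
    have "h -` T \<subseteq> S" "h -` T \<noteq> {}" "h -` T \<noteq> S"
      using T vimage_image by (metis vimage_mono, metis image_empty, metis)
    then have "\<not> closed_under f (h -` T)" using S unfolding is_cycle_def by blast
    then show "\<not> closed_under k T" using closed_under_iff vimage_image by metis
  qed
next
  assume S: "is_cycle k (h ` S)"
  show "is_cycle f S" unfolding is_cycle_def
  proof (intro conjI allI impI)
    show "S \<noteq> {}" using S unfolding is_cycle_def by blast
    show "closed_under f S" using S closed_under_iff unfolding is_cycle_def by blast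
    fix T assume T: "T \<subseteq> S \<and> T \<noteq> {} \<and> T \<noteq> S"
    have "h ` T \<subseteq> h ` S" "h ` T \<noteq> {}" "h ` T \<noteq> h ` S"
      using T vimage_image by (blast, blast, metis)
    then show "\<not> closed_under f T" using S closed_under_iff unfolding is_cycle_def by blast
  qed
qed

lemma range_iff: "x \<in> range f \<longleftrightarrow> h x \<in> range k"
proof
  assume "x \<in> range f"
  then obtain z where "x = inv h (k (h z))" using f_conj by auto
  then show "h x \<in> range k" using h_inv by auto
next
  assume "h x \<in> range k"
  then obtain y where "h x = k y" by auto
  then have "x = f (inv h y)" using f_conj h_inv by (metis comp_apply)
  then show "x \<in> range f" by blast
qed

lemma finite_image_iff: "finite (h ` S) \<longleftrightarrow> finite S"
  using finite_image_iff[OF inj_on_subset[OF inj_h subset_UNIV]] .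

lemma card_image: "card (h ` S) = card S"
  using card_image[OF inj_on_subset[OF inj_h subset_UNIV]] .

lemma fwd_cycle_iff: "is_fwd_cycle f S \<longleftrightarrow> is_fwd_cycle k (h ` S)"
proof -
  have "S - range f \<noteq> {} \<longleftrightarrow> h ` S - range k \<noteq> {}" using range_iff by blast
  then show ?thesis unfolding is_fwd_cycle_def using cycle_iff finite_image_iff by blast
qed

lemma open_cycle_iff: "is_open_cycle f S \<longleftrightarrow> is_open_cycle k (h ` S)"
  unfolding is_open_cycle_def using cycle_iff finite_image_iff fwd_cycle_iff by blast

lemma ecard_transfer:
  assumes "\<And>S. P f S \<longleftrightarrow> P k (h ` S)"
  shows "ecard {S. P f S} = ecard {S. P k S}"
proof (rule ecard_bij_betw)
  show "bij_betw ((`) h) {S. P f S} {S. P k S}"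
    unfolding bij_betw_def
  proof
    show "inj_on ((`) h) {S. P f S}" by (metis inj_onI vimage_image(1))
    show "(`) h ` {S. P f S} = {S. P k S}"
    proof
      show "(`) h ` {S. P f S} \<subseteq> {S. P k S}" using assms by blast
      show "{S. P k S} \<subseteq> (`) h ` {S. P f S}"
      proof
        fix T assume "T \<in> {S. P k S}"
        then have "h -` T \<in> {S. P f S}" using assms vimage_image by simp
        then show "T \<in> (`) h ` {S. P f S}" using vimage_image by (metis image_eqI)
      qed
    qed
  qed
qed

lemma C_open_conj: "C_open f = C_open k"
  unfolding C_open_def by (rule ecard_transfer) (rule open_cycle_iff)

lemma C_fwd_conj: "C_fwd f = C_fwd k"
  unfolding C_fwd_def by (rule ecard_transfer) (rule fwd_cycle_iff)

lemma C_n_conj: "C_n n f = C_n n k"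
  unfolding C_n_def
  by (rule ecard_transfer[where P = "\<lambda>f S. is_cycle f S \<and> finite S \<and> card S = n"])
    (simp add: cycle_iff finite_image_iff card_image)

end

theorem mainTheorem8:
  fixes f g h h1 h2 :: "'a::countable \<Rightarrow> 'a"
  assumes "infinite (UNIV :: 'a set)"
    and "inj f" and "inj g"
    and "bij h"
    and "Fin_perm h1" and "Fin_perm h2"
    and "f = inv h \<circ> h2 \<circ> g \<circ> h1 \<circ> h"
  shows "approx_fin f g"
proof -
  define k where "k = h2 \<circ> g \<circ> h1"
  define D where "D = {x. h1 x \<noteq> x} \<union> g -` {y. h2 y \<noteq> y}"
  have "finite D"
    unfolding D_def using assms(3,5,6) finite_vimageI unfolding Fin_perm_def by blast
  have "inj k" unfolding k_def using assms(3,5,6) unfolding Fin_perm_def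
    by (metis bij_is_inj inj_compose)
  have "finite_perturbation g k D (D \<union> g ` D \<union> k ` D)"
    using assms(3) \<open>inj k\<close> \<open>finite D\<close> by unfold_locales (auto simp: D_def k_def)
  then have "approx_fin k g" by (rule finite_perturbation.approx_fin_perturbation)
  moreover have conj: "conjugation f k h"
    using assms(4,7) unfolding k_def by unfold_locales (simp_all add: comp_assoc)
  ultimately show ?thesis
    using conjugation.C_open_conj[OF conj] conjugation.C_fwd_conj[OF conj]
      conjugation.C_n_conj[OF conj] unfolding approx_fin_def by simp
qed

end
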